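(* Let $0\leq\alpha<1$, $0<\epsilon<1-\alpha$, and let $\beta\geq1$ and $\lambda>0$ satisfy $0<\lambda<\min\{\epsilon,\frac1\beta\}\big(\frac{2}{\operatorname{diam}(\Omega)}\big)^{\beta-1}$. Let $\mu$ be a doubling measure on $\mathbb{R}^d$, $\Omega\subset\mathbb{R}^d$ a bounded convex domain and $r$ an admissible radius function in $\Omega$ satisfying $|r(x)-r(y)|\leq|x-y|$ for all $x,y\in\Omega$ and $\lambda\operatorname{dist}(x,\partial\Omega)^\beta\leq r(x)\leq\epsilon\operatorname{dist}(x,\partial\Omega)$ for all $x\in\Omega$. For $n\in\mathbb{N}$ let $\Omega_n=\{x\in\Omega:\operatorname{dist}(x,\partial\Omega)>(1-\epsilon)^n\}$, and let $n_0=n_0(\epsilon,\Omega)$ be such that $\operatorname{diam}(\Omega_n)\geq\frac12\operatorname{diam}(\Omega)$ for all $n\geq n_0$. Then there are constants $C>0$ and $0<\theta\leq1$, depending only on $\mu$ and $d$, such that for every $u\in C(\overline{\Omega})$, every $n\geq n_0$ and every $0\leq t\leq\frac12\operatorname{diam}(\Omega)$, $$\omega_{T_\alpha u,\Omega_n}(t)\leq \alpha\,\omega_{u,\Omega_{n+1}}(t) + (1-\alpha)\,C\,\|u\|_\infty\,\lambda^{-\theta}(1-\epsilon)^{-n\beta\theta}\,t^{\theta}.$$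
   Context: A doubling measure on $\mathbb{R}^d$ is a positive Borel measure $\mu$ with $0<\mu(B)<\infty$ for every open ball $B$ and $\mu(B(a,2s))\leq D\mu(B(a,s))$ for some $D\geq1$ and all $a$, $s>0$. An admissible radius function in $\Omega$ is $r:\Omega\to(0,\infty)$ with $0<r(x)\leq\operatorname{dist}(x,\partial\Omega)$; $B_x=B(x,r(x))$ (open ball). For $x\in\Omega$: $Su(x)=\frac12(\sup_{B_x}u+\inf_{B_x}u)$, $Mu(x)=\frac{1}{\mu(B_x)}\int_{B_x}u\,d\mu$, $T_\alpha=\alpha S+(1-\alpha)M$. A concave modulus of continuity is a non-decreasing concave $\omega:[0,\infty)\to[0,\infty)$ with $\omega(0)=0$; for a convex set $E$ and $v$ continuous on $E$, $\omega_{v,E}$ is the lowest concave modulus of continuity of $v$ on $E$, so $|v(x)-v(y)|\leq\omega_{v,E}(|x-y|)$ for $x,y\in E$. $\|u\|_\infty$ is the supremum norm on $\overline{\Omega}$. *)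

theory Defs
  imports "HOL-Analysis.Analysis" "HOL-Probability.Probability"
begin

text \<open>Doubling measure on the euclidean space 'a (= R^d with d = DIM('a)).\<close>
definition doubling_measure :: "'a::euclidean_space measure \<Rightarrow> bool" where
  "doubling_measure \<mu> \<longleftrightarrow>
     sets \<mu> = sets borel \<and>
     (\<forall>a s. s > 0 \<longrightarrow> 0 < emeasure \<mu> (ball a s) \<and> emeasure \<mu> (ball a s) < \<infinity>) \<and>
     (\<exists>D::real. D \<ge> 1 \<and> (\<forall>a s. s > 0 \<longrightarrow>
         emeasure \<mu> (ball a (2 * s)) \<le> ennreal D * emeasure \<mu> (ball a s)))"

definition bdist :: "'a::euclidean_space set \<Rightarrow> 'a \<Rightarrow> real" where
  "bdist \<Omega> x = infdist x (frontier \<Omega>)"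

definition admissible_radius :: "'a::euclidean_space set \<Rightarrow> ('a \<Rightarrow> real) \<Rightarrow> bool" where
  "admissible_radius \<Omega> r \<longleftrightarrow> (\<forall>x\<in>\<Omega>. 0 < r x \<and> r x \<le> bdist \<Omega> x)"

definition Sop :: "('a::euclidean_space \<Rightarrow> real) \<Rightarrow> ('a \<Rightarrow> real) \<Rightarrow> 'a \<Rightarrow> real" where
  "Sop r u x = (Sup (u ` ball x (r x)) + Inf (u ` ball x (r x))) / 2"

definition Mop :: "'a::euclidean_space measure \<Rightarrow> ('a \<Rightarrow> real) \<Rightarrow> ('a \<Rightarrow> real) \<Rightarrow> 'a \<Rightarrow> real" where
  "Mop \<mu> r u x = (1 / measure \<mu> (ball x (r x))) * (LINT y:ball x (r x)|\<mu>. u y)"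

definition Top :: "real \<Rightarrow> 'a::euclidean_space measure \<Rightarrow> ('a \<Rightarrow> real) \<Rightarrow> ('a \<Rightarrow> real) \<Rightarrow> 'a \<Rightarrow> real" where
  "Top \<alpha> \<mu> r u x = \<alpha> * Sop r u x + (1 - \<alpha>) * Mop \<mu> r u x"

definition concave_modulus :: "(real \<Rightarrow> real) \<Rightarrow> bool" where
  "concave_modulus \<omega> \<longleftrightarrow> mono_on {0..} \<omega> \<and> concave_on {0..} \<omega> \<and> \<omega> 0 = 0 \<and>
      (\<forall>t\<ge>0. \<omega> t \<ge> 0)"

text \<open>Lowest concave modulus of continuity of v on E (pointwise infimum over all concave
  moduli of continuity of v on E; value \<infinity> if there is none).\<close>
definition lowest_modulus :: "('a::euclidean_space \<Rightarrow> real) \<Rightarrow> 'a set \<Rightarrow> real \<Rightarrow> ereal" where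
  "lowest_modulus v E t =
     (INF \<omega> \<in> {\<omega>. concave_modulus \<omega> \<and> (\<forall>x\<in>E. \<forall>y\<in>E. \<bar>v x - v y\<bar> \<le> \<omega> (dist x y))}. ereal (\<omega> t))"

definition sup_norm :: "'a::euclidean_space set \<Rightarrow> ('a \<Rightarrow> real) \<Rightarrow> real" where
  "sup_norm \<Omega> u = Sup ((\<lambda>x. \<bar>u x\<bar>) ` closure \<Omega>)"

definition Omega_n :: "'a::euclidean_space set \<Rightarrow> real \<Rightarrow> nat \<Rightarrow> 'a set" where
  "Omega_n \<Omega> \<epsilon> n = {x\<in>\<Omega>. bdist \<Omega> x > (1 - \<epsilon>) ^ n}"

end

(*
  Write T = alpha S + (1 - alpha) M.  The midrange S u at x only sees u on the ball B(x, r x),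
  which lies in the next layer Omega_(n+1); moving the centre by h changes the radius by at most h,
  so the supremum and the infimum move by omega(h + dr) and omega(h - dr), and concavity of omega
  averages the two to omega(h).  The average M u over two nearby balls differs by at most
  2 |u|_inf mu(symmetric difference) / mu(ball), and the symmetric difference lies in annuli of
  width 2h.  For a doubling measure an annulus of relative width s/R has measure
  O((s/R)^theta) of the ball, by comparing adjacent annuli through a Fubini double count.  On
  Omega_n all radii are at least lam (1 - eps)^(n beta), which yields the Hoelder modulus.
*)

theory Submission
  imports Defs
begin

lemma concave_on_powr_pos:
  assumes "0 < \<theta>" "\<theta> \<le> 1"
  shows "concave_on {0<..} (\<lambda>x::real. x powr \<theta>)"
proof (rule f''_le0_imp_concave[where f' = "\<lambda>x. \<theta> * x powr (\<theta> - 1)"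
      and f'' = "\<lambda>x. \<theta> * ((\<theta> - 1) * x powr (\<theta> - 1 - 1))"])
  fix x :: real assume x: "x \<in> {0<..}"
  show "((\<lambda>x. x powr \<theta>) has_real_derivative \<theta> * x powr (\<theta> - 1)) (at x)"
    using x by (auto intro!: derivative_eq_intros)
  show "((\<lambda>x. \<theta> * x powr (\<theta> - 1)) has_real_derivative \<theta> * ((\<theta> - 1) * x powr (\<theta> - 1 - 1))) (at x)"
    using x by (auto intro!: derivative_eq_intros)
  show "\<theta> * ((\<theta> - 1) * x powr (\<theta> - 1 - 1)) \<le> 0"
    using assms x by (simp add: mult_nonneg_nonpos mult_nonpos_nonneg)
qed auto

lemma concave_on_powr:
  assumes "0 < \<theta>" "\<theta> \<le> 1"
  shows "concave_on {0..} (\<lambda>x::real. x powr \<theta>)"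
  unfolding concave_on_iff
proof (intro conjI ballI allI impI)
  fix x y u v :: real
  assume x: "x \<in> {0..}" and y: "y \<in> {0..}" and u: "u \<ge> 0" and v: "v \<ge> 0" and uv: "u + v = 1"
  have scale: "b * z powr \<theta> \<le> (b * z) powr \<theta>" if "0 \<le> b" "b \<le> 1" "0 \<le> z" for b z :: real
  proof -
    have "b \<le> b powr \<theta>"
      using powr_mono'[of \<theta> 1 b] that assms by (cases "b = 0") auto
    then have "b * z powr \<theta> \<le> b powr \<theta> * z powr \<theta>"
      by (simp add: mult_right_mono)
    also have "\<dots> = (b * z) powr \<theta>" using that by (simp add: powr_mult)
    finally show ?thesis .
  qed
  show "u * x powr \<theta> + v * y powr \<theta> \<le> (u *\<^sub>R x + v *\<^sub>R y) powr \<theta>"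
  proof (cases "x = 0 \<or> y = 0")
    case True
    then show ?thesis
      using scale[of v y] scale[of u x] u v uv x y assms by auto
  next
    case False
    then have "x \<in> {0<..}" "y \<in> {0<..}" using x y by auto
    then show ?thesis using concave_onD[OF concave_on_powr_pos[OF assms], of v x y] u v uv
      by (auto simp: eq_diff_eq[symmetric])
  qed
qed (simp add: convex_real_interval)

lemma concave_modulus_powr:
  assumes "0 \<le> K" "0 < \<theta>" "\<theta> \<le> 1"
  shows "concave_modulus (\<lambda>s. K * s powr \<theta>)"
  unfolding concave_modulus_def
proof (intro conjI allI impI)
  show "mono_on {0..} (\<lambda>s. K * s powr \<theta>)"
    using assms by (intro mono_onI mult_left_mono powr_mono2) auto
  show "concave_on {0..} (\<lambda>s. K * s powr \<theta>)"
    using assms(1) concave_on_powr[OF assms(2,3)] by (rule concave_on_cmul)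
qed (use assms in auto)

lemma concave_modulus_lincomb:
  assumes "concave_modulus \<omega>1" "concave_modulus \<omega>2" "0 \<le> a" "0 \<le> b"
  shows "concave_modulus (\<lambda>s. a * \<omega>1 s + b * \<omega>2 s)"
  unfolding concave_modulus_def
proof (intro conjI allI impI)
  show "mono_on {0..} (\<lambda>s. a * \<omega>1 s + b * \<omega>2 s)"
    using assms unfolding concave_modulus_def mono_on_def by (auto intro!: add_mono mult_left_mono)
  show "concave_on {0..} (\<lambda>s. a * \<omega>1 s + b * \<omega>2 s)"
    using assms unfolding concave_modulus_def by (intro concave_on_add concave_on_cmul) auto
qed (use assms in \<open>auto simp: concave_modulus_def\<close>)

lemma lowest_modulus_le:
  assumes "concave_modulus \<omega>" "\<forall>x\<in>E. \<forall>y\<in>E. \<bar>v x - v y\<bar> \<le> \<omega> (dist x y)"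
  shows "lowest_modulus v E t \<le> ereal (\<omega> t)"
  unfolding lowest_modulus_def using assms by (intro INF_lower) auto

lemma lowest_modulus_eq_infinity:
  assumes "\<nexists>\<omega>. concave_modulus \<omega> \<and> (\<forall>x\<in>E. \<forall>y\<in>E. \<bar>v x - v y\<bar> \<le> \<omega> (dist x y))"
  shows "lowest_modulus v E t = \<infinity>"
proof -
  have empty: "{\<omega>. concave_modulus \<omega> \<and> (\<forall>x\<in>E. \<forall>y\<in>E. \<bar>v x - v y\<bar> \<le> \<omega> (dist x y))} = {}"
    using assms by blast
  show ?thesis unfolding lowest_modulus_def empty by (simp add: top_ereal_def)
qed

text \<open>The infimum of concave moduli of continuity is again one, so the lowest modulus is attained.\<close>

lemma lowest_modulus_attained:
  assumes "concave_modulus \<omega>0" "\<forall>x\<in>E. \<forall>y\<in>E. \<bar>v x - v y\<bar> \<le> \<omega>0 (dist x y)"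
  obtains \<omega> where "concave_modulus \<omega>" "\<forall>x\<in>E. \<forall>y\<in>E. \<bar>v x - v y\<bar> \<le> \<omega> (dist x y)"
    "\<And>t. 0 \<le> t \<Longrightarrow> lowest_modulus v E t = ereal (\<omega> t)"
proof -
  define W where "W = {\<omega>. concave_modulus \<omega> \<and> (\<forall>x\<in>E. \<forall>y\<in>E. \<bar>v x - v y\<bar> \<le> \<omega> (dist x y))}"
  have ne: "W \<noteq> {}" using assms by (auto simp: W_def)
  define \<omega>s where "\<omega>s s = Inf ((\<lambda>\<omega>. \<omega> s) ` W)" for s
  have cm: "concave_modulus \<omega>" if "\<omega> \<in> W" for \<omega> using that by (simp add: W_def)
  have nn: "\<omega> s \<ge> 0" if "\<omega> \<in> W" "s \<ge> 0" for \<omega> s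
    using cm[OF that(1)] that(2) by (simp add: concave_modulus_def)
  have low: "\<omega>s s \<le> \<omega> s" if "\<omega> \<in> W" "s \<ge> 0" for \<omega> s
    unfolding \<omega>s_def using nn that by (intro cInf_lower bdd_belowI[of _ 0]) auto
  have great: "c \<le> \<omega>s s" if "\<And>\<omega>. \<omega> \<in> W \<Longrightarrow> c \<le> \<omega> s" for c s
    unfolding \<omega>s_def using ne that by (intro cInf_greatest) auto
  have mono: "\<omega>s s \<le> \<omega>s s'" if "0 \<le> s" "s \<le> s'" for s s'
  proof (rule great)
    fix \<omega> assume w: "\<omega> \<in> W"
    have "\<omega> s \<le> \<omega> s'" using cm[OF w] that unfolding concave_modulus_def mono_on_def by auto
    then show "\<omega>s s \<le> \<omega> s'" using low[OF w] that by force
  qed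
  have concave: "a * \<omega>s x + b * \<omega>s y \<le> \<omega>s (a *\<^sub>R x + b *\<^sub>R y)"
    if "0 \<le> x" "0 \<le> y" "0 \<le> a" "0 \<le> b" "a + b = 1" for x y a b :: real
  proof (rule great)
    fix \<omega> assume w: "\<omega> \<in> W"
    have "a * \<omega>s x + b * \<omega>s y \<le> a * \<omega> x + b * \<omega> y"
      using low[OF w] that by (intro add_mono mult_left_mono) auto
    also have "\<dots> \<le> \<omega> (a *\<^sub>R x + b *\<^sub>R y)"
      using cm[OF w] that unfolding concave_modulus_def concave_on_iff by simp
    finally show "a * \<omega>s x + b * \<omega>s y \<le> \<omega> (a *\<^sub>R x + b *\<^sub>R y)" .
  qed
  have zero: "\<omega>s 0 = 0"
  proof -
    obtain \<omega> where w: "\<omega> \<in> W" using ne by blast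
    have "\<omega>s 0 \<le> \<omega> 0" by (rule low[OF w]) simp
    moreover have "\<omega> 0 = 0" using cm[OF w] by (simp add: concave_modulus_def)
    moreover have "0 \<le> \<omega>s 0" using nn by (intro great) auto
    ultimately show ?thesis by simp
  qed
  have "\<omega>s \<in> W"
    unfolding W_def concave_modulus_def concave_on_iff
    using mono concave zero nn
    by (auto simp: convex_real_interval mono_on_def intro!: great) (auto simp: W_def)
  moreover have "lowest_modulus v E t = ereal (\<omega>s t)" if "t \<ge> 0" for t
  proof (rule antisym)
    show "lowest_modulus v E t \<le> ereal (\<omega>s t)"
      unfolding lowest_modulus_def W_def[symmetric] using \<open>\<omega>s \<in> W\<close> by (rule INF_lower)
    show "ereal (\<omega>s t) \<le> lowest_modulus v E t"
      unfolding lowest_modulus_def W_def[symmetric] using low that by (intro INF_greatest) auto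
  qed
  ultimately show ?thesis using that by (auto simp: W_def)
qed

lemma ball_near_point:
  fixes x y z :: "'a::euclidean_space"
  assumes z: "z \<in> ball x R" and R': "0 < R'" and R: "\<bar>R - R'\<bar> \<le> dist x y"
  shows "\<exists>w\<in>ball y R'. dist z w \<le> R - R' + dist x y"
proof -
  define h where "h = dist x y"
  have dz: "dist y z < R + h" using z dist_triangle[of y z x] by (simp add: h_def dist_commute)
  have Rh: "R + h > 0" using R' R h_def by auto
  define c where "c = R' / (R + h)"
  have c: "0 \<le> c" "c \<le> 1" using R' R Rh by (auto simp: c_def h_def)
  define w where "w = y + c *\<^sub>R (z - y)"
  have "dist y w = c * dist y z" by (simp add: w_def dist_norm c norm_minus_commute)
  also have "\<dots> < R'"
  proof (cases "dist y z = 0")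
    case False
    then have "c * dist y z < c * (R + h)"
      using dz R' Rh by (intro mult_strict_left_mono) (auto simp: c_def)
    also have "c * (R + h) = R'" using Rh by (simp add: c_def)
    finally show ?thesis .
  qed (use R' in simp)
  finally have w: "w \<in> ball y R'" by simp
  have "dist z w = norm ((1 - c) *\<^sub>R (z - y))" by (simp add: w_def dist_norm algebra_simps)
  also have "\<dots> = (1 - c) * dist y z" using c by (simp add: dist_norm norm_minus_commute)
  also have "\<dots> \<le> (1 - c) * (R + h)" using dz c by (intro mult_left_mono) auto
  also have "\<dots> = R - R' + h" using Rh by (simp add: c_def field_simps)
  finally show ?thesis using w h_def by blast
qed

text \<open>The radius difference \<open>R - R'\<close> shifts the supremum and the infimum in opposite directions;
  averaging the two shifts and using concavity of \<open>\<omega>\<close> leaves \<open>\<omega> (dist x y)\<close>.\<close>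

lemma midrange_ball_diff_le:
  fixes u :: "'a::euclidean_space \<Rightarrow> real"
  assumes cm: "concave_modulus \<omega>"
    and bnd: "\<forall>p\<in>E. \<forall>q\<in>E. \<bar>u p - u q\<bar> \<le> \<omega> (dist p q)"
    and sub: "ball x R \<subseteq> E" "ball y R' \<subseteq> E"
    and R: "0 < R" "0 < R'" "\<bar>R - R'\<bar> \<le> dist x y"
    and bdd: "bdd_above (u ` E)" "bdd_below (u ` E)"
  shows "(Sup (u ` ball x R) + Inf (u ` ball x R)) / 2 - (Sup (u ` ball y R') + Inf (u ` ball y R')) / 2
    \<le> \<omega> (dist x y)"
proof -
  define a where "a = R - R' + dist x y"
  define b where "b = R' - R + dist x y"
  have ab: "a \<ge> 0" "b \<ge> 0" using R by (auto simp: a_def b_def)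
  have mono: "\<omega> s \<le> \<omega> t" if "0 \<le> s" "s \<le> t" for s t
    using cm that unfolding concave_modulus_def mono_on_def by auto
  have close: "u p - u q \<le> \<omega> c" if "p \<in> E" "q \<in> E" "dist p q \<le> c" for p q c
    using bnd that mono[of "dist p q" c] by (meson abs_le_D1 order_trans zero_le_dist)
  have ne: "ball x R \<noteq> {}" "ball y R' \<noteq> {}" using R by auto
  have bdd_balls: "bdd_above (u ` ball x R)" "bdd_below (u ` ball x R)"
    "bdd_above (u ` ball y R')" "bdd_below (u ` ball y R')"
    using bdd sub by (meson bdd_above_mono bdd_below_mono image_mono)+
  have sup: "Sup (u ` ball x R) \<le> Sup (u ` ball y R') + \<omega> a"
  proof (rule cSUP_least[OF ne(1)])
    fix z assume z: "z \<in> ball x R"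
    obtain w where w: "w \<in> ball y R'" "dist z w \<le> a"
      using ball_near_point[OF z R(2,3)] a_def by blast
    have "z \<in> E" "w \<in> E" using z w sub by auto
    with w have "u z \<le> u w + \<omega> a" using close[of z w a] by simp
    also have "u w \<le> Sup (u ` ball y R')" using w bdd_balls by (intro cSUP_upper) auto
    finally show "u z \<le> Sup (u ` ball y R') + \<omega> a" by simp
  qed
  have inf: "Inf (u ` ball x R) - \<omega> b \<le> Inf (u ` ball y R')"
  proof (rule cINF_greatest[OF ne(2)])
    fix z assume z: "z \<in> ball y R'"
    obtain w where w: "w \<in> ball x R" "dist z w \<le> b"
      using ball_near_point[OF z R(1), of x] R(3) b_def
      by (auto simp: dist_commute abs_minus_commute)
    have "Inf (u ` ball x R) \<le> u w" using w bdd_balls by (intro cINF_lower) auto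
    also have "u w \<le> u z + \<omega> b"
      using close[of w z b] z w sub by (force simp: dist_commute)
    finally show "Inf (u ` ball x R) - \<omega> b \<le> u z" by simp
  qed
  have "(1/2) * \<omega> a + (1/2) * \<omega> b \<le> \<omega> ((1/2) *\<^sub>R a + (1/2) *\<^sub>R b)"
  proof -
    have "concave_on {0..} \<omega>" using cm unfolding concave_modulus_def by auto
    from concave_onD[OF this, of "1/2" a b] ab show ?thesis by simp
  qed
  also have "(1/2) *\<^sub>R a + (1/2) *\<^sub>R b = dist x y" by (simp add: a_def b_def field_simps)
  finally show ?thesis using sup inf by (simp add: field_simps)
qed

lemma Sop_diff_le:
  fixes u :: "'a::euclidean_space \<Rightarrow> real"
  assumes "concave_modulus \<omega>"
    and "\<forall>p\<in>E. \<forall>q\<in>E. \<bar>u p - u q\<bar> \<le> \<omega> (dist p q)"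
    and "ball x (r x) \<subseteq> E" "ball y (r y) \<subseteq> E"
    and "0 < r x" "0 < r y" "\<bar>r x - r y\<bar> \<le> dist x y"
    and "bdd_above (u ` E)" "bdd_below (u ` E)"
  shows "\<bar>Sop r u x - Sop r u y\<bar> \<le> \<omega> (dist x y)"
  using midrange_ball_diff_le[OF assms] midrange_ball_diff_le[OF assms(1,2,4,3,6,5) _ assms(8,9)] assms(7)
  unfolding Sop_def by (auto simp: dist_commute abs_minus_commute)

definition doubling_constant :: "'a::euclidean_space measure \<Rightarrow> real" where
  "doubling_constant \<mu> = (SOME D. 1 \<le> D \<and>
     (\<forall>a s. 0 < s \<longrightarrow> measure \<mu> (ball a (2 * s)) \<le> D * measure \<mu> (ball a s)))"

definition annular_decay_exponent :: "'a::euclidean_space measure \<Rightarrow> real" where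
  "annular_decay_exponent \<mu> = log 3 (1 + 1 / doubling_constant \<mu> ^ 4)"

lemma annulus_ball_near:
  fixes a z :: "'a::euclidean_space"
  assumes s: "0 < s" "3 * s \<le> R" and z: "z \<in> ball a R - ball a (R - s)"
  obtains p where "ball p (s / 2) \<subseteq> (ball a (R - s) - ball a (R - 3 * s)) \<inter> ball z (2 * s)"
    "ball z (2 * s) \<subseteq> ball p (4 * s)"
proof -
  define d where "d = dist a z"
  have d: "R - s \<le> d" "d < R" "2 * s \<le> d" using z s by (auto simp: d_def)
  define c where "c = (d - 3/2 * s) / d"
  have c: "0 \<le> c" "c \<le> 1" using d s by (auto simp: c_def field_simps)
  define p where "p = a + c *\<^sub>R (z - a)"
  have "dist a p = c * d" using c by (simp add: p_def dist_norm d_def norm_minus_commute)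
  also have "\<dots> = d - 3/2 * s" using d s by (simp add: c_def)
  finally have dap: "dist a p = d - 3/2 * s" .
  have "dist z p = norm ((1 - c) *\<^sub>R (z - a))" by (simp add: p_def dist_norm algebra_simps)
  also have "\<dots> = (1 - c) * d" using c by (simp add: d_def dist_norm norm_minus_commute)
  also have "\<dots> = 3/2 * s" using d s by (simp add: c_def field_simps)
  finally have dzp: "dist z p = 3/2 * s" .
  show ?thesis
  proof
    show "ball p (s / 2) \<subseteq> (ball a (R - s) - ball a (R - 3 * s)) \<inter> ball z (2 * s)"
    proof
      fix q assume "q \<in> ball p (s / 2)"
      then show "q \<in> (ball a (R - s) - ball a (R - 3 * s)) \<inter> ball z (2 * s)"
        using dap dzp d dist_triangle[of a q p] dist_triangle[of a p q] dist_triangle[of z q p]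
        by (simp add: dist_commute)
    qed
    show "ball z (2 * s) \<subseteq> ball p (4 * s)"
    proof
      fix q assume "q \<in> ball z (2 * s)"
      then show "q \<in> ball p (4 * s)" using dzp s dist_triangle[of p q z] by (simp add: dist_commute)
    qed
  qed
qed

lemma ball_diff_subset_annulus:
  fixes x y :: "'a::metric_space"
  assumes "\<bar>R - R'\<bar> \<le> dist x y"
  shows "ball x R - ball y R' \<subseteq> ball x R - ball x (R - 2 * dist x y)"
proof
  fix z assume "z \<in> ball x R - ball y R'"
  then show "z \<in> ball x R - ball x (R - 2 * dist x y)"
    using assms dist_triangle[of y z x] by (auto simp: dist_commute)
qed

lemma abs_quotient_diff_le:
  fixes I J m m' N S :: real
  assumes "0 < m" "0 < m'" "\<bar>I - J\<bar> \<le> N * S" "\<bar>m - m'\<bar> \<le> S" "\<bar>J\<bar> \<le> N * m'"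
  shows "\<bar>I / m - J / m'\<bar> \<le> 2 * N * S / m"
proof -
  have "I / m - J / m' = (I - J) / m + J * (m' - m) / (m * m')"
    using assms(1,2) by (simp add: field_simps)
  then have "\<bar>I / m - J / m'\<bar> \<le> \<bar>I - J\<bar> / m + \<bar>J\<bar> * \<bar>m' - m\<bar> / (m * m')"
    using assms(1,2) by (simp add: abs_divide abs_mult order_trans[OF abs_triangle_ineq])
  also have "\<dots> \<le> N * S / m + N * m' * S / (m * m')"
    using assms by (intro add_mono divide_right_mono mult_mono) (auto simp: abs_minus_commute)
  also have "\<dots> = 2 * N * S / m" using assms(1,2) by (simp add: field_simps)
  finally show ?thesis .
qed

context
  fixes \<mu> :: "'a::euclidean_space measure"
  assumes dm: "doubling_measure \<mu>"
begin

lemma doubling_sets [measurable_cong]: "sets \<mu> = sets borel"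
  using dm by (simp add: doubling_measure_def)

lemma doubling_space: "space \<mu> = UNIV"
  using sets_eq_imp_space_eq[OF doubling_sets] by simp

lemma doubling_emeasure_ball_finite: "emeasure \<mu> (ball a s) < \<infinity>"
  using dm by (cases "0 < s") (auto simp: doubling_measure_def ball_empty not_less)

lemma doubling_emeasure_eq_measure:
  assumes "A \<subseteq> ball c r" "A \<in> sets borel"
  shows "emeasure \<mu> A = ennreal (measure \<mu> A)"
  using assms emeasure_mono[of A "ball c r" \<mu>] doubling_emeasure_ball_finite[of c r]
  by (intro emeasure_eq_ennreal_measure) (auto simp: doubling_sets top_unique)

lemma doubling_fmeasurable: "A \<subseteq> ball c r \<Longrightarrow> A \<in> sets borel \<Longrightarrow> A \<in> fmeasurable \<mu>"
  using doubling_emeasure_eq_measure by (simp add: fmeasurable_def doubling_sets)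

lemma doubling_measure_mono:
  "A \<subseteq> B \<Longrightarrow> B \<subseteq> ball c r \<Longrightarrow> A \<in> sets borel \<Longrightarrow> B \<in> sets borel \<Longrightarrow> measure \<mu> A \<le> measure \<mu> B"
  by (rule measure_mono_fmeasurable) (auto simp: doubling_fmeasurable doubling_sets)

lemma doubling_measure_ball_pos:
  assumes "0 < s"
  shows "0 < measure \<mu> (ball a s)"
proof -
  have "0 < emeasure \<mu> (ball a s)" using dm assms by (simp add: doubling_measure_def)
  then show ?thesis using doubling_emeasure_eq_measure[of "ball a s" a s] by simp
qed

lemma doubling_constant_spec:
  "1 \<le> doubling_constant \<mu> \<and>
   (\<forall>a s. 0 < s \<longrightarrow> measure \<mu> (ball a (2 * s)) \<le> doubling_constant \<mu> * measure \<mu> (ball a s))"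
  unfolding doubling_constant_def
proof (rule someI_ex)
  obtain D where D: "1 \<le> D" "\<And>a s. 0 < s \<Longrightarrow> emeasure \<mu> (ball a (2 * s)) \<le> ennreal D * emeasure \<mu> (ball a s)"
    using dm unfolding doubling_measure_def by blast
  have "measure \<mu> (ball a (2 * s)) \<le> D * measure \<mu> (ball a s)" if "0 < s" for a s
  proof -
    have "ennreal (measure \<mu> (ball a (2 * s))) \<le> ennreal D * ennreal (measure \<mu> (ball a s))"
      using D(2)[OF that, of a] doubling_emeasure_eq_measure[of "ball a (2 * s)" a "2 * s"]
        doubling_emeasure_eq_measure[of "ball a s" a s]
      by simp
    also have "\<dots> = ennreal (D * measure \<mu> (ball a s))" using D(1) by (simp add: ennreal_mult)
    finally have "ennreal (measure \<mu> (ball a (2 * s))) \<le> ennreal (D * measure \<mu> (ball a s))" .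
    then show ?thesis using D by (subst (asm) ennreal_le_iff) auto
  qed
  then show "\<exists>D. 1 \<le> D \<and> (\<forall>a s. 0 < s \<longrightarrow> measure \<mu> (ball a (2 * s)) \<le> D * measure \<mu> (ball a s))"
    using D(1) by blast
qed

lemma doubling_constant_ge_1: "1 \<le> doubling_constant \<mu>"
  using doubling_constant_spec by blast

lemma measure_ball_pow2_le:
  assumes "0 < s"
  shows "measure \<mu> (ball a (2 ^ k * s)) \<le> doubling_constant \<mu> ^ k * measure \<mu> (ball a s)"
proof (induction k)
  case (Suc k)
  have "measure \<mu> (ball a (2 ^ Suc k * s)) = measure \<mu> (ball a (2 * (2 ^ k * s)))"
    by (simp add: mult.assoc)
  also have "\<dots> \<le> doubling_constant \<mu> * measure \<mu> (ball a (2 ^ k * s))"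
    using doubling_constant_spec assms by simp
  also have "\<dots> \<le> doubling_constant \<mu> * (doubling_constant \<mu> ^ k * measure \<mu> (ball a s))"
    using Suc.IH doubling_constant_ge_1 by (intro mult_left_mono) auto
  finally show ?case by simp
qed simp

lemma doubling_sigma_finite: "sigma_finite_measure \<mu>"
proof
  let ?A = "range (\<lambda>n::nat. ball (0::'a) (real n))"
  have "x \<in> \<Union> ?A" for x :: 'a
    using reals_Archimedean2[of "norm x"] by auto
  then show "\<exists>A::'a set set. countable A \<and> A \<subseteq> sets \<mu> \<and> \<Union> A = space \<mu> \<and> (\<forall>a\<in>A. emeasure \<mu> a \<noteq> \<infinity>)"
    using doubling_emeasure_ball_finite by (intro exI[of _ ?A]) (auto simp: doubling_space less_top)
qed

lemma doubling_sets_pair: "sets (M \<Otimes>\<^sub>M \<mu>) = sets (borel :: ('a \<times> 'a) measure)"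
  if "sets M = sets borel"
  using that doubling_sets borel_prod by (metis sets_pair_measure_cong)

lemma measurable_emeasure_ball: "(\<lambda>z. emeasure \<mu> (ball z s)) \<in> borel_measurable borel"
proof -
  interpret sigma_finite_measure \<mu> by (rule doubling_sigma_finite)
  have "{p::'a \<times> 'a. dist (fst p) (snd p) < s} \<in> sets (borel \<Otimes>\<^sub>M \<mu>)"
    by (simp add: doubling_sets_pair open_Collect_less continuous_intros)
  from measurable_emeasure_Pair[OF this] show ?thesis
    by (simp add: ball_def vimage_def)
qed

text \<open>Double counting of the pairs \<open>(z, w) \<in> E \<times> F\<close> with \<open>dist z w < 2 * s\<close>, each weighted by
  \<open>1 / \<mu> (ball z (2 * s))\<close>; doubling controls the weight from the side of \<open>w\<close>.\<close>

lemma measure_le_by_local_density: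
  assumes E: "E \<in> sets borel" "E \<subseteq> ball c R" and F: "F \<in> sets borel" "F \<subseteq> ball c R"
    and s: "0 < s" and K: "0 < K"
    and dens: "\<And>z. z \<in> E \<Longrightarrow> measure \<mu> (ball z (2 * s)) \<le> K * measure \<mu> (F \<inter> ball z (2 * s))"
  shows "measure \<mu> E \<le> K * doubling_constant \<mu> * measure \<mu> F"
proof -
  interpret P: pair_sigma_finite \<mu> \<mu>
    by (simp add: pair_sigma_finite_def doubling_sigma_finite)
  define D where "D = doubling_constant \<mu>"
  have D: "1 \<le> D" using doubling_constant_ge_1 by (simp add: D_def)
  have [measurable]: "E \<in> sets \<mu>" "F \<in> sets \<mu>" using E F by (auto simp: doubling_sets)
  define g where "g z = measure \<mu> (ball z (2 * s))" for z
  have g_pos: "0 < g z" for z using doubling_measure_ball_pos s by (simp add: g_def)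
  have [measurable]: "g \<in> borel_measurable \<mu>"
    using measurable_emeasure_ball[of "2 * s"] unfolding g_def measure_def by measurable
  define G where "G = (E \<times> F) \<inter> {p. dist (fst p) (snd p) < 2 * s}"
  have [measurable]: "G \<in> sets (\<mu> \<Otimes>\<^sub>M \<mu>)"
    unfolding G_def using doubling_sets_pair[OF doubling_sets]
    by (intro sets.Int pair_measureI) (auto simp: open_Collect_less continuous_intros)
  define k where "k p = ennreal (1 / g (fst p)) * indicator G p" for p
  have k_meas: "k \<in> borel_measurable (\<mu> \<Otimes>\<^sub>M \<mu>)" unfolding k_def by measurable
  have row: "ennreal (1 / K) * indicator E z \<le> (\<integral>\<^sup>+ w. k (z, w) \<partial>\<mu>)" for z
  proof (cases "z \<in> E")
    case True
    have fin: "emeasure \<mu> (F \<inter> ball z (2 * s)) = ennreal (measure \<mu> (F \<inter> ball z (2 * s)))"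
      using F by (intro doubling_emeasure_eq_measure[of _ z "2 * s"]) auto
    have "(\<integral>\<^sup>+ w. k (z, w) \<partial>\<mu>) = (\<integral>\<^sup>+ w. ennreal (1 / g z) * indicator (F \<inter> ball z (2 * s)) w \<partial>\<mu>)"
      using True by (intro nn_integral_cong) (auto simp: k_def G_def indicator_def)
    also have "\<dots> = ennreal (1 / g z) * emeasure \<mu> (F \<inter> ball z (2 * s))"
      using F by (intro nn_integral_cmult_indicator) (auto simp: doubling_sets)
    also have "\<dots> = ennreal (measure \<mu> (F \<inter> ball z (2 * s)) / g z)"
      using g_pos[of z] fin by (simp add: ennreal_mult'' [symmetric] divide_inverse mult.commute)
    finally show ?thesis
      using True dens[OF True] g_pos[of z] K by (simp add: ennreal_leI field_simps g_def)
  qed simp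
  have column: "(\<integral>\<^sup>+ z. k (z, w) \<partial>\<mu>) \<le> ennreal D * indicator F w" for w
  proof (cases "w \<in> F")
    case True
    define mw where "mw = measure \<mu> (ball w (2 * s))"
    have mw: "0 < mw" using doubling_measure_ball_pos s by (simp add: mw_def)
    have "k (z, w) \<le> ennreal (D / mw) * indicator (ball w (2 * s)) z" for z
    proof (cases "(z, w) \<in> G")
      case True
      then have dzw: "dist z w < 2 * s" by (simp add: G_def)
      have "ball w (2 * s) \<subseteq> ball z (2 ^ 1 * (2 * s))"
      proof
        fix q assume "q \<in> ball w (2 * s)"
        then show "q \<in> ball z (2 ^ 1 * (2 * s))" using dzw dist_triangle[of z q w] by simp
      qed
      then have "mw \<le> measure \<mu> (ball z (2 ^ 1 * (2 * s)))"
        unfolding mw_def by (intro doubling_measure_mono) auto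
      also have "\<dots> \<le> D * g z" unfolding g_def D_def using measure_ball_pow2_le[of "2 * s" z 1] s by simp
      finally have "1 / g z \<le> D / mw" using mw g_pos[of z] by (simp add: field_simps)
      then show ?thesis using True dzw by (simp add: k_def ennreal_leI dist_commute)
    qed (simp add: k_def)
    then have "(\<integral>\<^sup>+ z. k (z, w) \<partial>\<mu>) \<le> (\<integral>\<^sup>+ z. ennreal (D / mw) * indicator (ball w (2 * s)) z \<partial>\<mu>)"
      by (intro nn_integral_mono) auto
    also have "\<dots> = ennreal (D / mw) * ennreal mw"
      using doubling_emeasure_eq_measure[of "ball w (2 * s)" w "2 * s"]
      by (subst nn_integral_cmult_indicator) (auto simp: doubling_sets mw_def)
    also have "\<dots> = ennreal D" using mw D by (simp add: ennreal_mult'' [symmetric])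
    finally show ?thesis using True by simp
  qed (simp add: k_def G_def)
  have "ennreal (1 / K) * emeasure \<mu> E = (\<integral>\<^sup>+ z. ennreal (1 / K) * indicator E z \<partial>\<mu>)"
    by (simp add: nn_integral_cmult_indicator)
  also have "\<dots> \<le> (\<integral>\<^sup>+ z. (\<integral>\<^sup>+ w. k (z, w) \<partial>\<mu>) \<partial>\<mu>)"
    by (intro nn_integral_mono row)
  also have "\<dots> = (\<integral>\<^sup>+ w. (\<integral>\<^sup>+ z. k (z, w) \<partial>\<mu>) \<partial>\<mu>)"
    using P.Fubini[OF k_meas] by simp
  also have "\<dots> \<le> (\<integral>\<^sup>+ w. ennreal D * indicator F w \<partial>\<mu>)"
    by (intro nn_integral_mono column)
  also have "\<dots> = ennreal D * emeasure \<mu> F" by (simp add: nn_integral_cmult_indicator)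
  finally have "ennreal (1 / K) * ennreal (measure \<mu> E) \<le> ennreal D * ennreal (measure \<mu> F)"
    using doubling_emeasure_eq_measure[OF E(2,1)] doubling_emeasure_eq_measure[OF F(2,1)] by simp
  moreover have "ennreal (1 / K) * ennreal (measure \<mu> E) = ennreal (1 / K * measure \<mu> E)"
    using K by (intro ennreal_mult[symmetric]) auto
  moreover have "ennreal D * ennreal (measure \<mu> F) = ennreal (D * measure \<mu> F)"
    using D by (intro ennreal_mult[symmetric]) auto
  ultimately have "ennreal (1 / K * measure \<mu> E) \<le> ennreal (D * measure \<mu> F)" by simp
  then have "1 / K * measure \<mu> E \<le> D * measure \<mu> F"
    using D by (subst (asm) ennreal_le_iff) auto
  then show ?thesis using K by (simp add: D_def field_simps)
qed

lemma annulus_measure_le_inner: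
  assumes s: "0 < s" "3 * s \<le> R"
  shows "measure \<mu> (ball a R - ball a (R - s))
    \<le> doubling_constant \<mu> ^ 4 * measure \<mu> (ball a (R - s) - ball a (R - 3 * s))"
proof -
  define D where "D = doubling_constant \<mu>"
  define F where "F = ball a (R - s) - ball a (R - 3 * s)"
  have "measure \<mu> (ball z (2 * s)) \<le> D ^ 3 * measure \<mu> (F \<inter> ball z (2 * s))"
    if z: "z \<in> ball a R - ball a (R - s)" for z
  proof -
    obtain p where p: "ball p (s / 2) \<subseteq> F \<inter> ball z (2 * s)" "ball z (2 * s) \<subseteq> ball p (2 ^ 3 * (s / 2))"
      using annulus_ball_near[OF s z] unfolding F_def by auto
    have "measure \<mu> (ball z (2 * s)) \<le> measure \<mu> (ball p (2 ^ 3 * (s / 2)))"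
      using p(2) by (intro doubling_measure_mono) auto
    also have "\<dots> \<le> D ^ 3 * measure \<mu> (ball p (s / 2))"
      unfolding D_def using s by (intro measure_ball_pow2_le) auto
    also have "measure \<mu> (ball p (s / 2)) \<le> measure \<mu> (F \<inter> ball z (2 * s))"
      using p(1) by (intro doubling_measure_mono[of _ _ z "2 * s"]) (auto simp: F_def)
    finally show ?thesis using doubling_constant_ge_1 by (simp add: D_def mult_left_mono)
  qed
  then have "measure \<mu> (ball a R - ball a (R - s)) \<le> D ^ 3 * D * measure \<mu> F"
    unfolding D_def using s doubling_constant_ge_1
    by (intro measure_le_by_local_density[of _ a R]) (auto simp: F_def)
  also have "D ^ 3 * D = D ^ 4" by (simp add: eval_nat_numeral)
  finally show ?thesis by (simp add: D_def F_def)
qed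

lemma annular_decay_exponent_pos: "0 < annular_decay_exponent \<mu>"
  and annular_decay_exponent_le_1: "annular_decay_exponent \<mu> \<le> 1"
proof -
  define x where "x = 1 + 1 / doubling_constant \<mu> ^ 4"
  have "0 < 1 / doubling_constant \<mu> ^ 4" "1 / doubling_constant \<mu> ^ 4 \<le> 1"
    using doubling_constant_ge_1 by (auto simp: one_le_power)
  then have "1 < x" "x \<le> 3" unfolding x_def by linarith+
  then show "0 < annular_decay_exponent \<mu>" "annular_decay_exponent \<mu> \<le> 1"
    unfolding annular_decay_exponent_def x_def[symmetric] by (auto simp: log_le_one_cancel_iff)
qed

lemma annulus_measure_growth:
  assumes t: "0 < t" "3 * t \<le> R"
  shows "3 powr annular_decay_exponent \<mu> * measure \<mu> (ball a R - ball a (R - t))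
    \<le> measure \<mu> (ball a R - ball a (R - 3 * t))"
proof -
  define D4 where "D4 = doubling_constant \<mu> ^ 4"
  have D4: "1 \<le> D4" using doubling_constant_ge_1 by (simp add: D4_def one_le_power)
  define g where "g t = measure \<mu> (ball a R - ball a (R - t))" for t
  have annuli: "ball a (R - t) - ball a (R - 3 * t) = (ball a R - ball a (R - 3 * t)) - (ball a R - ball a (R - t))"
    using t by auto
  have inner: "measure \<mu> (ball a (R - t) - ball a (R - 3 * t)) = g (3 * t) - g t"
    unfolding g_def annuli using t doubling_emeasure_eq_measure[of "ball a R - ball a (R - 3 * t)" a R]
    by (intro measure_Diff) (auto simp: doubling_sets)
  have "g t \<le> D4 * measure \<mu> (ball a (R - t) - ball a (R - 3 * t))"
    unfolding g_def D4_def by (rule annulus_measure_le_inner[OF t])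
  then have "g t \<le> D4 * (g (3 * t) - g t)" unfolding inner .
  then have "(1 + 1 / D4) * g t \<le> g (3 * t)" using D4 by (simp add: field_simps)
  moreover have "0 < 1 + 1 / D4" using D4 by (simp add: add_pos_pos)
  then have "3 powr annular_decay_exponent \<mu> = 1 + 1 / D4"
    unfolding annular_decay_exponent_def D4_def[symmetric] by (rule powr_log_cancel[rotated 2]) auto
  ultimately show ?thesis by (simp add: g_def)
qed

lemma annular_decay:
  assumes R: "0 < R" and s: "0 \<le> s"
  shows "measure \<mu> (ball a R - ball a (R - s))
    \<le> 3 * (s / R) powr annular_decay_exponent \<mu> * measure \<mu> (ball a R)"
proof -
  define \<theta> where "\<theta> = annular_decay_exponent \<mu>"
  have \<theta>: "0 < \<theta>" "\<theta> \<le> 1" using annular_decay_exponent_pos annular_decay_exponent_le_1 by (auto simp: \<theta>_def)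
  define g where "g t = measure \<mu> (ball a R - ball a (R - t))" for t
  define m where "m = measure \<mu> (ball a R)"
  have wide: "g t \<le> 3 * (t / R) powr \<theta> * m" if "R / 3 < t" for t
  proof -
    have "1 / 3 \<le> (1 / 3) powr \<theta>" using powr_mono'[of \<theta> 1 "1/3"] \<theta> by simp
    also have "\<dots> \<le> (t / R) powr \<theta>" using that R \<theta> by (intro powr_mono2) (auto simp: field_simps)
    finally have "1 \<le> 3 * (t / R) powr \<theta>" by simp
    then have "m \<le> 3 * (t / R) powr \<theta> * m"
      using mult_right_mono[of 1 "3 * (t / R) powr \<theta>" m] by (simp add: m_def)
    moreover have "g t \<le> m" unfolding g_def m_def by (rule doubling_measure_mono) auto
    ultimately show ?thesis by linarith
  qed
  have "\<forall>t. R / 3 ^ k < t \<and> t \<le> R \<longrightarrow> g t \<le> 3 * (t / R) powr \<theta> * m" for k :: nat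
  proof (induction k)
    case (Suc k)
    show ?case
    proof (intro allI impI)
      fix t assume t: "R / 3 ^ Suc k < t \<and> t \<le> R"
      show "g t \<le> 3 * (t / R) powr \<theta> * m"
      proof (cases "R / 3 < t")
        case False
        have "0 < R / 3 ^ Suc k" using R by simp
        then have t_pos: "0 < t" using t by linarith
        have "3 powr \<theta> * g t \<le> g (3 * t)"
          unfolding g_def \<theta>_def using False t_pos by (intro annulus_measure_growth) auto
        also have "\<dots> \<le> 3 * (3 * t / R) powr \<theta> * m"
          using Suc.IH t False by (simp add: field_simps)
        also have "\<dots> = 3 powr \<theta> * (3 * (t / R) powr \<theta> * m)"
          by (simp add: powr_mult[symmetric])
        finally show ?thesis by simp
      qed (rule wide)
    qed
  qed simp
  moreover obtain k :: nat where "R / 3 ^ k < s \<or> s = 0"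
    using real_arch_pow[of 3 "R / s"] s by (cases "s = 0") (auto simp: field_simps)
  ultimately show ?thesis
    using wide[of s] R by (cases "s \<le> R") (auto simp: g_def m_def \<theta>_def)
qed

lemma integrable_indicator_in_ball:
  "A \<in> sets borel \<Longrightarrow> A \<subseteq> ball c r \<Longrightarrow> integrable \<mu> (indicator A :: 'a \<Rightarrow> real)"
  using doubling_emeasure_eq_measure[of A c r] by (simp add: integrable_indicator_iff doubling_sets)

lemma integrable_bounded_continuous_in_ball:
  fixes g :: "'a \<Rightarrow> real"
  assumes A: "open A" "A \<subseteq> ball c r" and cont: "continuous_on A g" and bnd: "\<forall>z\<in>A. \<bar>g z\<bar> \<le> N"
  shows "integrable \<mu> (\<lambda>z. indicator A z *\<^sub>R g z)"
proof (rule Bochner_Integration.integrable_bound[where f = "\<lambda>z. N * indicator A z"])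
  show "integrable \<mu> (\<lambda>z. N * indicator A z :: real)"
    using integrable_indicator_in_ball[OF _ A(2)] A(1) by simp
  have "(\<lambda>z. indicator A z *\<^sub>R g z) \<in> borel_measurable borel"
    using A(1) cont by (intro borel_measurable_continuous_on_indicator) auto
  then show "(\<lambda>z. indicator A z *\<^sub>R g z) \<in> borel_measurable \<mu>"
    using measurable_cong_sets[OF doubling_sets refl] by blast
  show "AE z in \<mu>. norm (indicator A z *\<^sub>R g z) \<le> norm (N * indicator A z)"
    using bnd by (intro AE_I2) (auto simp: indicator_def)
qed

lemma set_integral_diff_le:
  fixes g :: "'a \<Rightarrow> real"
  assumes A: "open A" "A \<subseteq> ball c r" and B: "open B" "B \<subseteq> ball c' r'"
    and cont: "continuous_on (A \<union> B) g" and bnd: "\<forall>z\<in>A \<union> B. \<bar>g z\<bar> \<le> N"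
  shows "\<bar>(LINT z:A|\<mu>. g z) - (LINT z:B|\<mu>. g z)\<bar> \<le> N * (measure \<mu> (A - B) + measure \<mu> (B - A))"
proof -
  have iA: "integrable \<mu> (\<lambda>z. indicator A z *\<^sub>R g z)"
    using cont bnd by (intro integrable_bounded_continuous_in_ball[OF A]) (auto intro: continuous_on_subset)
  have iB: "integrable \<mu> (\<lambda>z. indicator B z *\<^sub>R g z)"
    using cont bnd by (intro integrable_bounded_continuous_in_ball[OF B]) (auto intro: continuous_on_subset)
  have iAB: "integrable \<mu> (indicator (A - B) :: 'a \<Rightarrow> real)" "integrable \<mu> (indicator (B - A) :: 'a \<Rightarrow> real)"
    using A B by (auto intro!: integrable_indicator_in_ball)
  have "(LINT z:A|\<mu>. g z) - (LINT z:B|\<mu>. g z) = (\<integral>z. indicator A z *\<^sub>R g z - indicator B z *\<^sub>R g z \<partial>\<mu>)"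
    unfolding set_lebesgue_integral_def using iA iB by simp
  also have "\<bar>\<dots>\<bar> \<le> (\<integral>z. N * indicator (A - B) z + N * indicator (B - A) z \<partial>\<mu>)"
  proof (rule integral_abs_bound_integral)
    show "integrable \<mu> (\<lambda>z. indicator A z *\<^sub>R g z - indicator B z *\<^sub>R g z)" using iA iB by simp
    show "integrable \<mu> (\<lambda>z. N * indicator (A - B) z + N * indicator (B - A) z :: real)" using iAB by simp
  qed (use bnd in \<open>auto simp: indicator_def\<close>)
  also have "\<dots> = N * (measure \<mu> (A - B) + measure \<mu> (B - A))"
    using iAB by (simp add: algebra_simps doubling_space)
  finally show ?thesis .
qed

lemma set_integral_abs_le:
  fixes g :: "'a \<Rightarrow> real"
  assumes "open A" "A \<subseteq> ball c r" "continuous_on A g" "\<forall>z\<in>A. \<bar>g z\<bar> \<le> N"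
  shows "\<bar>LINT z:A|\<mu>. g z\<bar> \<le> N * measure \<mu> A"
  using set_integral_diff_le[OF assms(1,2), of "{}" c r g N] assms(3,4)
  by (simp add: set_lebesgue_integral_def)

lemma measure_ball_diff_le:
  assumes \<rho>: "0 < \<rho>" "\<rho> \<le> R" and R: "\<bar>R - R'\<bar> \<le> dist x y"
  shows "measure \<mu> (ball x R - ball y R')
    \<le> 6 * (dist x y / \<rho>) powr annular_decay_exponent \<mu> * measure \<mu> (ball x R)"
proof -
  define \<theta> where "\<theta> = annular_decay_exponent \<mu>"
  have \<theta>: "0 < \<theta>" "\<theta> \<le> 1" using annular_decay_exponent_pos annular_decay_exponent_le_1 by (auto simp: \<theta>_def)
  have "(2 * dist x y / R) powr \<theta> \<le> (2 * dist x y / \<rho>) powr \<theta>"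
    using \<rho> \<theta> by (intro powr_mono2 divide_left_mono) auto
  also have "\<dots> = 2 powr \<theta> * (dist x y / \<rho>) powr \<theta>" by (simp add: powr_mult[symmetric])
  also have "\<dots> \<le> 2 * (dist x y / \<rho>) powr \<theta>"
    using powr_mono[of \<theta> 1 2] \<theta> by (intro mult_right_mono) auto
  finally have pw: "(2 * dist x y / R) powr \<theta> \<le> 2 * (dist x y / \<rho>) powr \<theta>" .
  have "measure \<mu> (ball x R - ball y R') \<le> measure \<mu> (ball x R - ball x (R - 2 * dist x y))"
    using ball_diff_subset_annulus[OF R] by (intro doubling_measure_mono[of _ _ x R]) auto
  also have "\<dots> \<le> 3 * (2 * dist x y / R) powr \<theta> * measure \<mu> (ball x R)"
    unfolding \<theta>_def using \<rho> by (intro annular_decay) auto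
  also have "\<dots> \<le> 3 * (2 * (dist x y / \<rho>) powr \<theta>) * measure \<mu> (ball x R)"
    using pw by (intro mult_right_mono mult_left_mono) auto
  finally show ?thesis by (simp add: \<theta>_def)
qed

lemma measure_ball_le_nearby:
  assumes "0 < R" "dist x y < R" "\<bar>R - R'\<bar> \<le> dist x y"
  shows "measure \<mu> (ball y R') \<le> doubling_constant \<mu> ^ 2 * measure \<mu> (ball x R)"
proof -
  have "ball y R' \<subseteq> ball x (2 ^ 2 * R)"
  proof
    fix z assume "z \<in> ball y R'"
    then show "z \<in> ball x (2 ^ 2 * R)" using assms dist_triangle[of x z y] by simp
  qed
  then have "measure \<mu> (ball y R') \<le> measure \<mu> (ball x (2 ^ 2 * R))"
    by (intro doubling_measure_mono) auto
  also have "\<dots> \<le> doubling_constant \<mu> ^ 2 * measure \<mu> (ball x R)"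
    using assms(1) by (rule measure_ball_pow2_le)
  finally show ?thesis .
qed

lemma measure_ball_symdiff_le:
  assumes \<rho>: "0 < \<rho>" "\<rho> \<le> R" "\<rho> \<le> R'" and R: "\<bar>R - R'\<bar> \<le> dist x y" and near: "dist x y < \<rho>"
  shows "measure \<mu> (ball x R - ball y R') + measure \<mu> (ball y R' - ball x R)
    \<le> 6 * (1 + doubling_constant \<mu> ^ 2) * (dist x y / \<rho>) powr annular_decay_exponent \<mu>
      * measure \<mu> (ball x R)"
proof -
  define q where "q = 6 * (dist x y / \<rho>) powr annular_decay_exponent \<mu>"
  have "measure \<mu> (ball y R' - ball x R) \<le> q * measure \<mu> (ball y R')"
    using measure_ball_diff_le[OF \<rho>(1,3), of R y x] R by (simp add: q_def dist_commute abs_minus_commute)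
  also have "\<dots> \<le> q * (doubling_constant \<mu> ^ 2 * measure \<mu> (ball x R))"
    using \<rho> near R by (intro mult_left_mono measure_ball_le_nearby) (auto simp: q_def)
  finally show ?thesis
    using measure_ball_diff_le[OF \<rho>(1,2) R] by (simp add: q_def algebra_simps)
qed

lemma Mop_diff_le:
  fixes u r :: "'a \<Rightarrow> real"
  assumes \<rho>: "0 < \<rho>" "\<rho> \<le> r x" "\<rho> \<le> r y" and r: "\<bar>r x - r y\<bar> \<le> dist x y"
    and cont: "continuous_on (ball x (r x) \<union> ball y (r y)) u"
    and bnd: "\<forall>z\<in>ball x (r x) \<union> ball y (r y). \<bar>u z\<bar> \<le> N"
  shows "\<bar>Mop \<mu> r u x - Mop \<mu> r u y\<bar>
    \<le> 12 * (1 + doubling_constant \<mu> ^ 2) * N * (dist x y / \<rho>) powr annular_decay_exponent \<mu>"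
proof -
  define C where "C = 12 * (1 + doubling_constant \<mu> ^ 2)"
  define q where "q = (dist x y / \<rho>) powr annular_decay_exponent \<mu>"
  define mx where "mx = measure \<mu> (ball x (r x))"
  define my where "my = measure \<mu> (ball y (r y))"
  define Ix where "Ix = (LINT z:ball x (r x)|\<mu>. u z)"
  define Iy where "Iy = (LINT z:ball y (r y)|\<mu>. u z)"
  have m: "0 < mx" "0 < my" using doubling_measure_ball_pos \<rho> by (auto simp: mx_def my_def)
  have N: "0 \<le> N" using bnd \<rho> by (meson UnI1 abs_ge_zero centre_in_ball less_le_trans order_trans)
  have I: "\<bar>Ix\<bar> \<le> N * mx" "\<bar>Iy\<bar> \<le> N * my"
    unfolding Ix_def Iy_def mx_def my_def using cont bnd
    by (auto intro!: set_integral_abs_le intro: continuous_on_subset)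
  have "\<bar>Ix / mx - Iy / my\<bar> \<le> C * N * q"
  proof (cases "dist x y < \<rho>")
    case True
    define S where "S = measure \<mu> (ball x (r x) - ball y (r y)) + measure \<mu> (ball y (r y) - ball x (r x))"
    have "\<bar>Ix - Iy\<bar> \<le> N * S"
      unfolding Ix_def Iy_def S_def using cont bnd by (intro set_integral_diff_le) auto
    moreover have "\<bar>mx - my\<bar> \<le> 1 * S"
      using set_integral_diff_le[of "ball x (r x)" x "r x" "ball y (r y)" y "r y" "\<lambda>_. 1" 1]
      by (simp add: S_def mx_def my_def set_lebesgue_integral_def doubling_space)
    ultimately have "\<bar>Ix / mx - Iy / my\<bar> \<le> 2 * N * S / mx"
      using abs_quotient_diff_le[OF m] I by simp
    also have "\<dots> \<le> 2 * N * (6 * (1 + doubling_constant \<mu> ^ 2) * q * mx) / mx"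
      unfolding S_def mx_def q_def using N m \<rho> r True
      by (intro divide_right_mono mult_left_mono measure_ball_symdiff_le) auto
    also have "\<dots> = C * N * q" using m by (simp add: C_def)
    finally show ?thesis .
  next
    case False
    then have "1 \<le> q" using \<rho> annular_decay_exponent_pos by (simp add: q_def ge_one_powr_ge_zero)
    moreover have "2 \<le> C" unfolding C_def using zero_le_power2[of "doubling_constant \<mu>"] by simp
    ultimately have "2 \<le> C * q" using mult_left_mono[of 1 q C] by linarith
    have "\<bar>Ix / mx\<bar> \<le> N" "\<bar>Iy / my\<bar> \<le> N" using I m by (simp_all add: abs_divide divide_le_eq)
    then have "\<bar>Ix / mx - Iy / my\<bar> \<le> 2 * N" by linarith
    also have "\<dots> \<le> C * q * N" using \<open>2 \<le> C * q\<close> N by (rule mult_right_mono)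
    also have "\<dots> = C * N * q" by simp
    finally show ?thesis .
  qed
  then show ?thesis by (simp add: Mop_def Ix_def Iy_def mx_def my_def C_def q_def)
qed

end

lemma abs_le_sup_norm:
  fixes u :: "'a::euclidean_space \<Rightarrow> real"
  assumes "bounded \<Omega>" "continuous_on (closure \<Omega>) u" "z \<in> closure \<Omega>"
  shows "\<bar>u z\<bar> \<le> sup_norm \<Omega> u"
proof -
  have "compact ((\<lambda>x. \<bar>u x\<bar>) ` closure \<Omega>)"
    using assms by (intro compact_continuous_image continuous_intros) (auto simp: compact_closure)
  then have "bdd_above ((\<lambda>x. \<bar>u x\<bar>) ` closure \<Omega>)"
    by (intro bounded_imp_bdd_above compact_imp_bounded)
  then show ?thesis unfolding sup_norm_def using assms(3) by (intro cSUP_upper)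
qed

lemma ball_subset_if_le_bdist:
  fixes \<Omega> :: "'a::euclidean_space set"
  assumes "open \<Omega>" "x \<in> \<Omega>" "\<rho> \<le> bdist \<Omega> x"
  shows "ball x \<rho> \<subseteq> \<Omega>"
proof
  fix z assume z: "z \<in> ball x \<rho>"
  show "z \<in> \<Omega>"
  proof (rule ccontr)
    assume "z \<notin> \<Omega>"
    have "0 < \<rho>" using z zero_le_dist[of x z] by (simp del: zero_le_dist)
    have "ball x \<rho> \<inter> frontier \<Omega> \<noteq> {}"
    proof (rule connected_Int_frontier)
      show "ball x \<rho> \<inter> \<Omega> \<noteq> {}" using \<open>0 < \<rho>\<close> assms(2) centre_in_ball by blast
      show "ball x \<rho> - \<Omega> \<noteq> {}" using z \<open>z \<notin> \<Omega>\<close> by blast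
    qed simp
    then obtain p where "p \<in> ball x \<rho>" "p \<in> frontier \<Omega>" by blast
    then show False using infdist_le[of p "frontier \<Omega>" x] assms(3) by (simp add: bdist_def)
  qed
qed

lemma ball_subset_Omega_n_Suc:
  fixes \<Omega> :: "'a::euclidean_space set"
  assumes "open \<Omega>" "x \<in> Omega_n \<Omega> \<epsilon> n" "\<epsilon> < 1" "\<rho> \<le> \<epsilon> * bdist \<Omega> x"
  shows "ball x \<rho> \<subseteq> Omega_n \<Omega> \<epsilon> (Suc n)"
proof
  fix z assume z: "z \<in> ball x \<rho>"
  have x: "x \<in> \<Omega>" "(1 - \<epsilon>) ^ n < bdist \<Omega> x" using assms(2) by (auto simp: Omega_n_def)
  have "0 < (1 - \<epsilon>) ^ n" using assms(3) by simp
  then have "\<rho> \<le> bdist \<Omega> x" using assms(3,4) x(2) mult_right_mono[of \<epsilon> 1 "bdist \<Omega> x"] by linarith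
  then have "z \<in> \<Omega>" using ball_subset_if_le_bdist[OF assms(1) x(1)] z by blast
  have "bdist \<Omega> x \<le> bdist \<Omega> z + dist x z" unfolding bdist_def by (rule infdist_triangle)
  then have "(1 - \<epsilon>) * bdist \<Omega> x < bdist \<Omega> z" using z assms(4) by (simp add: algebra_simps)
  moreover have "(1 - \<epsilon>) * (1 - \<epsilon>) ^ n < (1 - \<epsilon>) * bdist \<Omega> x" using x assms(3) by simp
  ultimately show "z \<in> Omega_n \<Omega> \<epsilon> (Suc n)" using \<open>z \<in> \<Omega>\<close> by (simp add: Omega_n_def)
qed

lemma radius_ge_on_Omega_n:
  fixes \<Omega> :: "'a::euclidean_space set"
  assumes x: "x \<in> Omega_n \<Omega> \<epsilon> n" and "\<epsilon> < 1" "0 \<le> \<beta>" "0 \<le> lam"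
    and r: "lam * bdist \<Omega> x powr \<beta> \<le> r x"
  shows "lam * (1 - \<epsilon>) powr (real n * \<beta>) \<le> r x"
proof -
  have "(1 - \<epsilon>) powr (real n * \<beta>) = ((1 - \<epsilon>) ^ n) powr \<beta>"
    using assms(2) by (simp add: powr_powr[symmetric] powr_realpow)
  also have "\<dots> \<le> bdist \<Omega> x powr \<beta>"
    using assms by (intro powr_mono2) (auto simp: Omega_n_def)
  finally show ?thesis using assms(4) r by (meson mult_left_mono order_trans)
qed

lemma Sop_modulus_on_Omega_n:
  fixes \<Omega> :: "'a::euclidean_space set" and u r :: "'a \<Rightarrow> real"
  assumes \<Omega>: "open \<Omega>" "bounded \<Omega>" and \<epsilon>: "\<epsilon> < 1" and u: "continuous_on (closure \<Omega>) u"
    and adm: "admissible_radius \<Omega> r" and r_lip: "\<forall>x\<in>\<Omega>. \<forall>y\<in>\<Omega>. \<bar>r x - r y\<bar> \<le> dist x y"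
    and r_le: "\<forall>x\<in>\<Omega>. r x \<le> \<epsilon> * bdist \<Omega> x"
    and cm: "concave_modulus \<omega>"
    and modulus: "\<forall>x\<in>Omega_n \<Omega> \<epsilon> (Suc n). \<forall>y\<in>Omega_n \<Omega> \<epsilon> (Suc n). \<bar>u x - u y\<bar> \<le> \<omega> (dist x y)"
  shows "\<forall>x\<in>Omega_n \<Omega> \<epsilon> n. \<forall>y\<in>Omega_n \<Omega> \<epsilon> n. \<bar>Sop r u x - Sop r u y\<bar> \<le> \<omega> (dist x y)"
proof (intro ballI)
  fix x y assume x: "x \<in> Omega_n \<Omega> \<epsilon> n" and y: "y \<in> Omega_n \<Omega> \<epsilon> n"
  then have "x \<in> \<Omega>" "y \<in> \<Omega>" by (simp_all add: Omega_n_def)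
  have "\<bar>u z\<bar> \<le> sup_norm \<Omega> u" if "z \<in> Omega_n \<Omega> \<epsilon> (Suc n)" for z
    using that closure_subset by (intro abs_le_sup_norm[OF \<Omega>(2) u]) (auto simp: Omega_n_def)
  then have "bdd_above (u ` Omega_n \<Omega> \<epsilon> (Suc n))" "bdd_below (u ` Omega_n \<Omega> \<epsilon> (Suc n))"
    by (intro bdd_aboveI[of _ "sup_norm \<Omega> u"], force simp: abs_le_iff,
        intro bdd_belowI[of _ "- sup_norm \<Omega> u"], force simp: abs_le_iff)
  moreover have "ball x (r x) \<subseteq> Omega_n \<Omega> \<epsilon> (Suc n)" "ball y (r y) \<subseteq> Omega_n \<Omega> \<epsilon> (Suc n)"
    using ball_subset_Omega_n_Suc[OF \<Omega>(1) _ \<epsilon>] x y r_le \<open>x \<in> \<Omega>\<close> \<open>y \<in> \<Omega>\<close> by auto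
  ultimately show "\<bar>Sop r u x - Sop r u y\<bar> \<le> \<omega> (dist x y)"
    using cm modulus r_lip adm \<open>x \<in> \<Omega>\<close> \<open>y \<in> \<Omega>\<close>
    by (intro Sop_diff_le) (auto simp: admissible_radius_def)
qed

lemma Mop_modulus_on_Omega_n:
  fixes \<mu> :: "'a::euclidean_space measure" and \<Omega> :: "'a set" and u r :: "'a \<Rightarrow> real"
  assumes dm: "doubling_measure \<mu>" and \<Omega>: "open \<Omega>" "bounded \<Omega>"
    and \<epsilon>: "\<epsilon> < 1" and \<beta>: "0 \<le> \<beta>" and lam: "0 < lam" and u: "continuous_on (closure \<Omega>) u"
    and r_lip: "\<forall>x\<in>\<Omega>. \<forall>y\<in>\<Omega>. \<bar>r x - r y\<bar> \<le> dist x y"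
    and r_bounds: "\<forall>x\<in>\<Omega>. lam * bdist \<Omega> x powr \<beta> \<le> r x \<and> r x \<le> \<epsilon> * bdist \<Omega> x"
    and x: "x \<in> Omega_n \<Omega> \<epsilon> n" and y: "y \<in> Omega_n \<Omega> \<epsilon> n"
  shows "\<bar>Mop \<mu> r u x - Mop \<mu> r u y\<bar> \<le> 12 * (1 + doubling_constant \<mu> ^ 2) * sup_norm \<Omega> u
    * (dist x y / (lam * (1 - \<epsilon>) powr (real n * \<beta>))) powr annular_decay_exponent \<mu>"
proof (rule Mop_diff_le[OF dm])
  have "x \<in> \<Omega>" "y \<in> \<Omega>" using x y by (simp_all add: Omega_n_def)
  then have "lam * bdist \<Omega> x powr \<beta> \<le> r x" "lam * bdist \<Omega> y powr \<beta> \<le> r y"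
    using r_bounds by blast+
  then show "lam * (1 - \<epsilon>) powr (real n * \<beta>) \<le> r x" "lam * (1 - \<epsilon>) powr (real n * \<beta>) \<le> r y"
    using radius_ge_on_Omega_n[OF x \<epsilon> \<beta> less_imp_le[OF lam]]
      radius_ge_on_Omega_n[OF y \<epsilon> \<beta> less_imp_le[OF lam]] by blast+
  show "0 < lam * (1 - \<epsilon>) powr (real n * \<beta>)" using lam \<epsilon> by simp
  show "\<bar>r x - r y\<bar> \<le> dist x y" using r_lip \<open>x \<in> \<Omega>\<close> \<open>y \<in> \<Omega>\<close> by simp
  have "ball x (r x) \<subseteq> Omega_n \<Omega> \<epsilon> (Suc n)" "ball y (r y) \<subseteq> Omega_n \<Omega> \<epsilon> (Suc n)"
    using ball_subset_Omega_n_Suc[OF \<Omega>(1) x \<epsilon>, of "r x"] ball_subset_Omega_n_Suc[OF \<Omega>(1) y \<epsilon>, of "r y"]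
      r_bounds \<open>x \<in> \<Omega>\<close> \<open>y \<in> \<Omega>\<close> by simp_all
  moreover have "Omega_n \<Omega> \<epsilon> (Suc n) \<subseteq> closure \<Omega>" using closure_subset by (auto simp: Omega_n_def)
  ultimately have "ball x (r x) \<union> ball y (r y) \<subseteq> closure \<Omega>" by blast
  then show "continuous_on (ball x (r x) \<union> ball y (r y)) u"
    and "\<forall>z\<in>ball x (r x) \<union> ball y (r y). \<bar>u z\<bar> \<le> sup_norm \<Omega> u"
    using abs_le_sup_norm[OF \<Omega>(2) u] continuous_on_subset[OF u] by auto
qed

lemma lowest_modulus_Top_le:
  fixes u r :: "'a::euclidean_space \<Rightarrow> real"
  assumes \<alpha>: "0 \<le> \<alpha>" "\<alpha> \<le> 1" and t: "0 \<le> t"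
    and cm2: "concave_modulus \<omega>2"
    and M: "\<forall>x\<in>E. \<forall>y\<in>E. \<bar>Mop \<mu> r u x - Mop \<mu> r u y\<bar> \<le> \<omega>2 (dist x y)"
    and S: "\<And>\<omega>. concave_modulus \<omega> \<Longrightarrow> \<forall>x\<in>E'. \<forall>y\<in>E'. \<bar>u x - u y\<bar> \<le> \<omega> (dist x y) \<Longrightarrow>
      \<forall>x\<in>E. \<forall>y\<in>E. \<bar>Sop r u x - Sop r u y\<bar> \<le> \<omega> (dist x y)"
  shows "lowest_modulus (Top \<alpha> \<mu> r u) E t \<le> ereal \<alpha> * lowest_modulus u E' t + ereal ((1 - \<alpha>) * \<omega>2 t)"
proof -
  have combine: "lowest_modulus (Top \<alpha> \<mu> r u) E t \<le> ereal (\<alpha> * \<omega>1 t + (1 - \<alpha>) * \<omega>2 t)"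
    if cm1: "concave_modulus \<omega>1"
      and S1: "\<forall>x\<in>E. \<forall>y\<in>E. \<alpha> * \<bar>Sop r u x - Sop r u y\<bar> \<le> \<alpha> * \<omega>1 (dist x y)" for \<omega>1
  proof (rule lowest_modulus_le)
    show "concave_modulus (\<lambda>s. \<alpha> * \<omega>1 s + (1 - \<alpha>) * \<omega>2 s)"
      using cm1 cm2 \<alpha> by (intro concave_modulus_lincomb) auto
    show "\<forall>x\<in>E. \<forall>y\<in>E. \<bar>Top \<alpha> \<mu> r u x - Top \<alpha> \<mu> r u y\<bar> \<le> \<alpha> * \<omega>1 (dist x y) + (1 - \<alpha>) * \<omega>2 (dist x y)"
    proof (intro ballI)
      fix x y assume xy: "x \<in> E" "y \<in> E"
      have "Top \<alpha> \<mu> r u x - Top \<alpha> \<mu> r u y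
          = \<alpha> * (Sop r u x - Sop r u y) + (1 - \<alpha>) * (Mop \<mu> r u x - Mop \<mu> r u y)"
        by (simp add: Top_def algebra_simps)
      then have "\<bar>Top \<alpha> \<mu> r u x - Top \<alpha> \<mu> r u y\<bar>
          \<le> \<alpha> * \<bar>Sop r u x - Sop r u y\<bar> + (1 - \<alpha>) * \<bar>Mop \<mu> r u x - Mop \<mu> r u y\<bar>"
        using \<alpha> by (simp add: abs_mult order_trans[OF abs_triangle_ineq])
      also have "\<dots> \<le> \<alpha> * \<omega>1 (dist x y) + (1 - \<alpha>) * \<omega>2 (dist x y)"
        using S1 M xy \<alpha> by (intro add_mono[OF _ mult_left_mono]) auto
      finally show "\<bar>Top \<alpha> \<mu> r u x - Top \<alpha> \<mu> r u y\<bar> \<le> \<alpha> * \<omega>1 (dist x y) + (1 - \<alpha>) * \<omega>2 (dist x y)" .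
    qed
  qed
  show ?thesis
  proof (cases "\<exists>\<omega>. concave_modulus \<omega> \<and> (\<forall>x\<in>E'. \<forall>y\<in>E'. \<bar>u x - u y\<bar> \<le> \<omega> (dist x y))")
    case True
    then obtain \<omega> where \<omega>: "concave_modulus \<omega>" "\<forall>x\<in>E'. \<forall>y\<in>E'. \<bar>u x - u y\<bar> \<le> \<omega> (dist x y)"
      and lowest: "lowest_modulus u E' t = ereal (\<omega> t)"
      using lowest_modulus_attained t by metis
    have "lowest_modulus (Top \<alpha> \<mu> r u) E t \<le> ereal (\<alpha> * \<omega> t + (1 - \<alpha>) * \<omega>2 t)"
      using S[OF \<omega>] \<alpha> by (intro combine[OF \<omega>(1)]) (auto intro: mult_left_mono)
    then show ?thesis by (simp add: lowest)
  next
    case False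
    then have lowest: "lowest_modulus u E' t = \<infinity>" by (rule lowest_modulus_eq_infinity)
    show ?thesis
    proof (cases "\<alpha> = 0")
      case True
      have "concave_modulus (\<lambda>_. 0)"
        by (simp add: concave_modulus_def concave_on_const convex_real_interval mono_on_def)
      from combine[OF this] show ?thesis by (simp add: True lowest)
    qed (use \<alpha> lowest in simp)
  qed
qed

lemma Top_modulus_estimate:
  fixes \<mu> :: "'a::euclidean_space measure" and \<Omega> :: "'a set" and r u :: "'a \<Rightarrow> real"
  assumes dm: "doubling_measure \<mu>" and \<alpha>: "0 \<le> \<alpha>" "\<alpha> \<le> 1" and \<epsilon>: "\<epsilon> < 1" and \<beta>: "0 \<le> \<beta>"
    and lam: "0 < lam" and \<Omega>: "open \<Omega>" "\<Omega> \<noteq> {}" "bounded \<Omega>" and adm: "admissible_radius \<Omega> r"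
    and r_lip: "\<forall>x\<in>\<Omega>. \<forall>y\<in>\<Omega>. \<bar>r x - r y\<bar> \<le> dist x y"
    and r_bounds: "\<forall>x\<in>\<Omega>. lam * bdist \<Omega> x powr \<beta> \<le> r x \<and> r x \<le> \<epsilon> * bdist \<Omega> x"
    and u: "continuous_on (closure \<Omega>) u" and t: "0 \<le> t"
  shows "lowest_modulus (Top \<alpha> \<mu> r u) (Omega_n \<Omega> \<epsilon> n) t
    \<le> ereal \<alpha> * lowest_modulus u (Omega_n \<Omega> \<epsilon> (Suc n)) t
      + ereal ((1 - \<alpha>) * (12 * (1 + doubling_constant \<mu> ^ 2)) * sup_norm \<Omega> u
        * lam powr (- annular_decay_exponent \<mu>)
        * (1 - \<epsilon>) powr (- (real n * \<beta> * annular_decay_exponent \<mu>))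
        * t powr annular_decay_exponent \<mu>)"
proof -
  define \<theta> where "\<theta> = annular_decay_exponent \<mu>"
  define C where "C = 12 * (1 + doubling_constant \<mu> ^ 2)"
  define N where "N = sup_norm \<Omega> u"
  define \<rho> where "\<rho> = lam * (1 - \<epsilon>) powr (real n * \<beta>)"
  define \<omega> where "\<omega> s = C * N * lam powr (- \<theta>) * (1 - \<epsilon>) powr (- (real n * \<beta> * \<theta>)) * s powr \<theta>" for s
  obtain z where "z \<in> \<Omega>" using \<Omega>(2) by blast
  then have "0 \<le> N" unfolding N_def using abs_le_sup_norm[OF \<Omega>(3) u] closure_subset by force
  then have cm: "concave_modulus \<omega>" unfolding \<omega>_def C_def \<theta>_def
    using annular_decay_exponent_pos[OF dm] annular_decay_exponent_le_1[OF dm]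
    by (intro concave_modulus_powr) auto
  have \<omega>_eq: "C * N * (h / \<rho>) powr \<theta> = \<omega> h" if "0 \<le> h" for h
  proof -
    have "\<rho> powr \<theta> = lam powr \<theta> * (1 - \<epsilon>) powr (real n * \<beta> * \<theta>)"
      using lam \<epsilon> by (simp add: \<rho>_def powr_mult powr_powr)
    moreover have "(h / \<rho>) powr \<theta> = h powr \<theta> / \<rho> powr \<theta>"
      using that lam \<epsilon> by (simp add: powr_divide \<rho>_def)
    ultimately show ?thesis by (simp add: \<omega>_def powr_minus divide_inverse)
  qed
  have "\<forall>x\<in>Omega_n \<Omega> \<epsilon> n. \<forall>y\<in>Omega_n \<Omega> \<epsilon> n. \<bar>Mop \<mu> r u x - Mop \<mu> r u y\<bar> \<le> \<omega> (dist x y)"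
    using Mop_modulus_on_Omega_n[OF dm \<Omega>(1,3) \<epsilon> \<beta> lam u r_lip r_bounds]
    by (simp add: \<omega>_eq[symmetric] C_def N_def \<rho>_def \<theta>_def)
  then have "lowest_modulus (Top \<alpha> \<mu> r u) (Omega_n \<Omega> \<epsilon> n) t
      \<le> ereal \<alpha> * lowest_modulus u (Omega_n \<Omega> \<epsilon> (Suc n)) t + ereal ((1 - \<alpha>) * \<omega> t)"
    using Sop_modulus_on_Omega_n[OF \<Omega>(1,3) \<epsilon> u adm r_lip] r_bounds
    by (intro lowest_modulus_Top_le[OF \<alpha> t cm]) auto
  also have "(1 - \<alpha>) * \<omega> t = (1 - \<alpha>) * C * N * lam powr (- \<theta>) * (1 - \<epsilon>) powr (- (real n * \<beta> * \<theta>))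
      * t powr \<theta>"
    by (simp add: \<omega>_def mult.assoc)
  finally show ?thesis by (simp add: C_def N_def \<theta>_def)
qed

theorem proposition2p3:
  fixes \<mu> :: "'a::euclidean_space measure"
  assumes "doubling_measure \<mu>"
  shows "\<exists>C::real. C > 0 \<and> (\<exists>\<theta>::real. 0 < \<theta> \<and> \<theta> \<le> 1 \<and>
    (\<forall>(\<alpha>::real) (\<epsilon>::real) (\<beta>::real) (lam::real) (\<Omega>::'a set) (r::'a \<Rightarrow> real) (n0::nat).
      0 \<le> \<alpha> \<and> \<alpha> < 1 \<and> 0 < \<epsilon> \<and> \<epsilon> < 1 - \<alpha> \<and> \<beta> \<ge> 1 \<and>
      0 < lam \<and> lam < min \<epsilon> (1 / \<beta>) * (2 / diameter \<Omega>) powr (\<beta> - 1) \<and>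
      open \<Omega> \<and> \<Omega> \<noteq> {} \<and> connected \<Omega> \<and> bounded \<Omega> \<and> convex \<Omega> \<and>
      admissible_radius \<Omega> r \<and>
      (\<forall>x\<in>\<Omega>. \<forall>y\<in>\<Omega>. \<bar>r x - r y\<bar> \<le> dist x y) \<and>
      (\<forall>x\<in>\<Omega>. lam * bdist \<Omega> x powr \<beta> \<le> r x \<and> r x \<le> \<epsilon> * bdist \<Omega> x) \<and>
      (\<forall>n\<ge>n0. diameter (Omega_n \<Omega> \<epsilon> n) \<ge> diameter \<Omega> / 2)
      \<longrightarrow>
      (\<forall>(u::'a \<Rightarrow> real) (n::nat) (t::real).
         continuous_on (closure \<Omega>) u \<and> n \<ge> n0 \<and> 0 \<le> t \<and> t \<le> diameter \<Omega> / 2 \<longrightarrow>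
         lowest_modulus (Top \<alpha> \<mu> r u) (Omega_n \<Omega> \<epsilon> n) t
           \<le> ereal \<alpha> * lowest_modulus u (Omega_n \<Omega> \<epsilon> (Suc n)) t
             + ereal ((1 - \<alpha>) * C * sup_norm \<Omega> u * lam powr (- \<theta>)
                 * (1 - \<epsilon>) powr (- (real n * \<beta> * \<theta>)) * t powr \<theta>))))"
proof -
  let ?C = "12 * (1 + doubling_constant \<mu> ^ 2)" and ?\<theta> = "annular_decay_exponent \<mu>"
  have C: "0 < ?C" by (simp add: add_pos_nonneg)
  have \<theta>: "0 < ?\<theta>" "?\<theta> \<le> 1"
    using annular_decay_exponent_pos annular_decay_exponent_le_1 assms by auto
  show ?thesis
    by (rule exI[of _ ?C], rule conjI[OF C], rule exI[of _ ?\<theta>], intro conjI \<theta> allI impI, elim conjE,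
        rule Top_modulus_estimate[OF assms]; (assumption | linarith))
qed

end
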